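(* Let $E\subset\mathbb{S}^1\times M_{2\times2}(\mathbb{C})$ be a real-analytic complex line subbundle over $\mathbb{S}^1$ such that (1) $E^*=E$, i.e. for each $\lambda\in\mathbb{S}^1$ the fiber $E(\lambda)$ is closed under conjugate transpose, and (2) for every $\lambda\in\mathbb{S}^1$ except possibly finitely many, the fiber $E(\lambda)$ contains a positive definite Hermitian matrix. Then there exists a real-analytic section $X$ of $E$ such that $X(\lambda)$ is Hermitian and positive semidefinite for every $\lambda\in\mathbb{S}^1$ and $\det X\not\equiv0$. *)

theory Defs
  imports "HOL-Analysis.Analysis"
begin

type_synonym cmat2 = "complex^2^2"

definition conj_transpose :: "cmat2 \<Rightarrow> cmat2" where
  "conj_transpose A = (\<chi> i j. cnj (A $ j $ i))"

definition hermitian :: "cmat2 \<Rightarrow> bool" where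
  "hermitian A \<longleftrightarrow> conj_transpose A = A"

definition qform :: "cmat2 \<Rightarrow> complex^2 \<Rightarrow> complex" where
  "qform A x = (\<Sum>i\<in>UNIV. \<Sum>j\<in>UNIV. cnj (x $ i) * A $ i $ j * x $ j)"

definition pos_def :: "cmat2 \<Rightarrow> bool" where
  "pos_def A \<longleftrightarrow> hermitian A \<and> (\<forall>x. x \<noteq> 0 \<longrightarrow> 0 < Re (qform A x))"

definition pos_semidef :: "cmat2 \<Rightarrow> bool" where
  "pos_semidef A \<longleftrightarrow> hermitian A \<and> (\<forall>x. 0 \<le> Re (qform A x))"

definition cscale :: "complex \<Rightarrow> cmat2 \<Rightarrow> cmat2" where
  "cscale c A = (\<chi> i j. c * A $ i $ j)"

definition cspan1 :: "cmat2 \<Rightarrow> cmat2 set" where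
  "cspan1 A = {cscale c A | c. True}"

definition real_analytic_on :: "real set \<Rightarrow> (real \<Rightarrow> complex) \<Rightarrow> bool" where
  "real_analytic_on S f \<longleftrightarrow>
     (\<forall>x\<in>S. \<exists>r>0. \<exists>a::nat \<Rightarrow> complex.
        \<forall>y. \<bar>y - x\<bar> < r \<longrightarrow> (\<lambda>n. a n * complex_of_real (y - x) ^ n) sums f y)"

definition real_analytic_mat_on :: "real set \<Rightarrow> (real \<Rightarrow> cmat2) \<Rightarrow> bool" where
  "real_analytic_mat_on S f \<longleftrightarrow> (\<forall>i j. real_analytic_on S (\<lambda>t. f t $ i $ j))"

definition real_analytic_circle_section :: "(complex \<Rightarrow> cmat2) \<Rightarrow> bool" where
  "real_analytic_circle_section X \<longleftrightarrow> real_analytic_mat_on UNIV (\<lambda>\<theta>. X (cis \<theta>))"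

definition analytic_line_subbundle :: "(complex \<Rightarrow> cmat2 set) \<Rightarrow> bool" where
  "analytic_line_subbundle E \<longleftrightarrow>
     (\<forall>\<theta>0::real. \<exists>r>0. \<exists>s :: real \<Rightarrow> cmat2.
        real_analytic_mat_on {\<theta>0 - r <..< \<theta>0 + r} s \<and>
        (\<forall>\<theta>\<in>{\<theta>0 - r <..< \<theta>0 + r}. s \<theta> \<noteq> 0 \<and> E (cis \<theta>) = cspan1 (s \<theta>)))"

end

theory Submission
  imports Defs "HOL-Complex_Analysis.Cauchy_Integral_Formula"
begin

text \<open>
  Normalise each fibre to its unique element of trace one.  This is possible, and gives
  \<open>X = s / trace s\<close> for any local analytic frame \<open>s\<close>, once frames never have trace zero.
  A line containing a positive definite matrix satisfies \<open>4 |det| \<le> |trace|\<^sup>2\<close> (AM-GM for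
  the eigenvalues; both sides scale by \<open>|c|\<^sup>2\<close>), and by continuity this closed condition
  survives at the finitely many exceptional points.  A nonzero trace-free \<open>s\<close> with
  \<open>s\<^sup>* \<in> \<complex>s\<close> violates it, since then \<open>det s \<noteq> 0\<close>.  So \<open>X\<close> is real-analytic and Hermitian;
  at the generic points it is \<open>P / trace P\<close> for a positive definite \<open>P\<close>, hence positive
  definite, and positive semidefiniteness extends to the whole circle by continuity.
\<close>

section \<open>Real-analytic functions of a real variable\<close>

lemma powser_summable_ball_of_real:
  fixes a :: "nat \<Rightarrow> complex"
  assumes "\<forall>y. \<bar>y - x\<bar> < r \<longrightarrow> summable (\<lambda>n. a n * complex_of_real (y - x) ^ n)"
    and "w \<in> ball (of_real x) r"
  shows "summable (\<lambda>n. a n * (w - of_real x) ^ n)"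
proof -
  define \<rho> where "\<rho> = (cmod (w - of_real x) + r) / 2"
  have "cmod (w - of_real x) < r"
    using assms(2) by (simp add: dist_norm norm_minus_commute)
  then have lt: "cmod (w - of_real x) < \<rho>" "\<rho> < r"
    by (simp_all add: \<rho>_def)
  then have "\<bar>\<rho>\<bar> < r"
    using norm_ge_zero[of "w - of_real x"] by linarith
  then have "summable (\<lambda>n. a n * complex_of_real \<rho> ^ n)"
    using assms(1)[rule_format, of "x + \<rho>"] by simp
  then show ?thesis
    by (rule powser_inside) (use lt in simp)
qed

lemma real_analytic_on_iff_analytic_extension:
  "real_analytic_on S f \<longleftrightarrow>
     (\<forall>x\<in>S. \<exists>F. F analytic_on {of_real x} \<and> (\<forall>\<^sub>F y in nhds x. F (of_real y) = f y))"
proof (intro iffI ballI)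
  fix x assume "real_analytic_on S f" "x \<in> S"
  then obtain r a where "r > 0"
    and sums: "\<forall>y. \<bar>y - x\<bar> < r \<longrightarrow> (\<lambda>n. a n * complex_of_real (y - x) ^ n) sums f y"
    unfolding real_analytic_on_def by blast
  define F where "F w = (\<Sum>n. a n * (w - of_real x) ^ n)" for w
  have "\<forall>y. \<bar>y - x\<bar> < r \<longrightarrow> summable (\<lambda>n. a n * complex_of_real (y - x) ^ n)"
    using sums sums_summable by blast
  then have F_sums: "(\<lambda>n. a n * (w - of_real x) ^ n) sums F w" if "w \<in> ball (of_real x) r" for w
    unfolding F_def by (intro summable_sums powser_summable_ball_of_real[OF _ that])
  have "F analytic_on ball (of_real x) r"
    by (rule power_series_analytic) (rule F_sums)
  then have "F analytic_on {of_real x}"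
    by (rule analytic_on_subset) (simp add: \<open>r > 0\<close>)
  moreover have "\<forall>\<^sub>F y in nhds x. F (of_real y) = f y"
    unfolding eventually_nhds_metric
  proof (intro exI conjI allI impI)
    fix y assume "dist y x < r"
    then have "of_real y \<in> ball (complex_of_real x) r" "\<bar>y - x\<bar> < r"
      by (simp_all add: dist_norm dist_real_def flip: of_real_diff)
    then have "(\<lambda>n. a n * complex_of_real (y - x) ^ n) sums F (of_real y)"
      "(\<lambda>n. a n * complex_of_real (y - x) ^ n) sums f y"
      using F_sums sums by simp_all
    then show "F (of_real y) = f y"
      by (rule sums_unique2)
  qed fact
  ultimately show "\<exists>F. F analytic_on {of_real x} \<and> (\<forall>\<^sub>F y in nhds x. F (of_real y) = f y)"
    by blast
next
  assume ext: "\<forall>x\<in>S. \<exists>F. F analytic_on {of_real x} \<and> (\<forall>\<^sub>F y in nhds x. F (of_real y) = f y)"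
  show "real_analytic_on S f"
    unfolding real_analytic_on_def
  proof
    fix x assume "x \<in> S"
    then obtain F e d where "e > 0" "F holomorphic_on ball (of_real x) e"
      and "d > 0" and eq: "\<forall>y. dist y x < d \<longrightarrow> F (of_real y) = f y"
      using ext unfolding analytic_at_ball eventually_nhds_metric by blast
    then have "F analytic_on ball (of_real x) e"
      by (simp add: analytic_on_open)
    then have F_sums: "(\<lambda>n. (deriv ^^ n) F (of_real x) / fact n * (w - of_real x) ^ n) sums F w"
      if "w \<in> ball (of_real x) e" for w
      using that analytic_iff_power_series by blast
    show "\<exists>r>0. \<exists>a. \<forall>y. \<bar>y - x\<bar> < r \<longrightarrow> (\<lambda>n. a n * complex_of_real (y - x) ^ n) sums f y"
    proof (intro exI conjI allI impI)
      fix y assume "\<bar>y - x\<bar> < min e d"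
      then have "of_real y \<in> ball (complex_of_real x) e" "dist y x < d"
        by (simp_all add: dist_norm dist_real_def abs_minus_commute flip: of_real_diff)
      then have "(\<lambda>n. (deriv ^^ n) F (of_real x) / fact n * (of_real y - of_real x) ^ n) sums F (of_real y)"
        "F (of_real y) = f y"
        using F_sums eq by blast+
      then show "(\<lambda>n. (deriv ^^ n) F (of_real x) / fact n * complex_of_real (y - x) ^ n) sums f y"
        by simp
    qed (use \<open>e > 0\<close> \<open>d > 0\<close> in auto)
  qed
qed

lemma real_analytic_on_imp_isCont:
  assumes "real_analytic_on S f" "x \<in> S"
  shows "isCont f x"
proof -
  obtain F where F: "F analytic_on {of_real x}" and eq: "\<forall>\<^sub>F y in nhds x. F (of_real y) = f y"
    using assms unfolding real_analytic_on_iff_analytic_extension by blast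
  have "isCont (\<lambda>y. F (of_real y)) x"
    using isCont_o2[OF isCont_of_real[OF continuous_ident] analytic_at_imp_isCont[OF F]] .
  then show ?thesis
    using isCont_cong[OF eq] by simp
qed

lemma real_analytic_on_add:
  assumes "real_analytic_on S f" "real_analytic_on S g"
  shows "real_analytic_on S (\<lambda>x. f x + g x)"
  unfolding real_analytic_on_iff_analytic_extension
proof
  fix x assume "x \<in> S"
  then obtain F G where "F analytic_on {of_real x}" "G analytic_on {of_real x}"
    and "\<forall>\<^sub>F y in nhds x. F (of_real y) = f y" "\<forall>\<^sub>F y in nhds x. G (of_real y) = g y"
    using assms unfolding real_analytic_on_iff_analytic_extension by meson
  then show "\<exists>H. H analytic_on {of_real x} \<and> (\<forall>\<^sub>F y in nhds x. H (of_real y) = f y + g y)"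
    by (intro exI[of _ "\<lambda>z. F z + G z"] conjI analytic_intros) (auto elim: eventually_elim2)
qed

lemma real_analytic_on_divide:
  assumes "real_analytic_on S f" "real_analytic_on S g" "\<And>x. x \<in> S \<Longrightarrow> g x \<noteq> 0"
  shows "real_analytic_on S (\<lambda>x. f x / g x)"
  unfolding real_analytic_on_iff_analytic_extension
proof
  fix x assume "x \<in> S"
  then obtain F G where "F analytic_on {of_real x}" "G analytic_on {of_real x}"
    and "\<forall>\<^sub>F y in nhds x. F (of_real y) = f y" and G_eq: "\<forall>\<^sub>F y in nhds x. G (of_real y) = g y"
    using assms(1,2) unfolding real_analytic_on_iff_analytic_extension by meson
  moreover have "G (of_real x) \<noteq> 0"
    using eventually_nhds_x_imp_x[OF G_eq] assms(3) \<open>x \<in> S\<close> by simp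
  ultimately show "\<exists>H. H analytic_on {of_real x} \<and> (\<forall>\<^sub>F y in nhds x. H (of_real y) = f y / g y)"
    by (intro exI[of _ "\<lambda>z. F z / G z"] conjI analytic_intros) (auto elim: eventually_elim2)
qed

lemma real_analytic_on_cong:
  assumes "open S" "\<And>x. x \<in> S \<Longrightarrow> f x = g x" "real_analytic_on S f"
  shows "real_analytic_on S g"
  unfolding real_analytic_on_iff_analytic_extension
proof
  fix x assume "x \<in> S"
  then obtain F where "F analytic_on {of_real x}" "\<forall>\<^sub>F y in nhds x. F (of_real y) = f y"
    using assms(3) unfolding real_analytic_on_iff_analytic_extension by blast
  moreover have "\<forall>\<^sub>F y in nhds x. y \<in> S"
    using assms(1) \<open>x \<in> S\<close> by (rule eventually_nhds_in_open)
  ultimately have "\<forall>\<^sub>F y in nhds x. F (of_real y) = g y"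
    by (auto elim: eventually_elim2 simp: assms(2))
  with \<open>F analytic_on {of_real x}\<close>
  show "\<exists>F. F analytic_on {of_real x} \<and> (\<forall>\<^sub>F y in nhds x. F (of_real y) = g y)"
    by blast
qed

section \<open>Complex 2x2 matrices\<close>

lemma cmat2_eq_iff:
  "(A::cmat2) = B \<longleftrightarrow> A$1$1 = B$1$1 \<and> A$1$2 = B$1$2 \<and> A$2$1 = B$2$1 \<and> A$2$2 = B$2$2"
  by (auto simp: vec_eq_iff forall_2)

lemma cscale_nth [simp]: "cscale c A $ i $ j = c * A $ i $ j"
  by (simp add: cscale_def)

lemma conj_transpose_nth [simp]: "conj_transpose A $ i $ j = cnj (A $ j $ i)"
  by (simp add: conj_transpose_def)

lemma trace_2x2: "trace (A::'a::semiring_1^2^2) = A$1$1 + A$2$2"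
  by (simp add: trace_def sum_2)

lemma trace_cscale: "trace (cscale c A) = c * trace A"
  by (simp add: trace_2x2 algebra_simps)

lemma det_cscale: "det (cscale c A) = c^2 * det A"
  by (simp add: det_2 algebra_simps power2_eq_square)

lemma cscale_cscale: "cscale a (cscale b A) = cscale (a * b) A"
  by (simp add: cmat2_eq_iff)

lemma cscale_eq_0_iff: "cscale c A = 0 \<longleftrightarrow> c = 0 \<or> A = 0"
  by (auto simp: cmat2_eq_iff)

lemma qform_2x2:
  "qform A x = cnj (x$1) * A$1$1 * x$1 + cnj (x$1) * A$1$2 * x$2
             + cnj (x$2) * A$2$1 * x$1 + cnj (x$2) * A$2$2 * x$2"
  by (simp add: qform_def sum_2)

lemma qform_cscale: "qform (cscale c A) x = c * qform A x"
  by (simp add: qform_2x2 algebra_simps)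

lemma cspan1_self: "A \<in> cspan1 A"
  unfolding cspan1_def by (rule CollectI, rule exI[of _ 1]) (simp add: cmat2_eq_iff)

lemma cspan1_eq:
  assumes "B \<in> cspan1 A" "B \<noteq> 0"
  shows "cspan1 B = cspan1 A"
proof -
  obtain c where c: "B = cscale c A"
    using assms(1) by (auto simp: cspan1_def)
  with assms(2) have "c \<noteq> 0"
    by (auto simp: cscale_eq_0_iff)
  then have "cscale k A = cscale (k / c) B" for k
    by (simp add: c cscale_cscale)
  then show ?thesis
    unfolding cspan1_def using c cscale_cscale by blast
qed

lemma hermitian_nth: "hermitian A \<Longrightarrow> A $ i $ j = cnj (A $ j $ i)"
  unfolding hermitian_def by (metis conj_transpose_nth)

lemma pos_def_trace_det:
  assumes "pos_def P"
  obtains a d :: real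
  where "trace P = of_real a" "det P = of_real d" "0 < a" "0 < d" "4 * d \<le> a^2"
proof -
  define p u b where "p = Re (P$1$1)" and "u = Re (P$2$2)" and "b = P$1$2"
  have herm: "hermitian P" and pos: "\<And>x. x \<noteq> 0 \<Longrightarrow> 0 < Re (qform P x)"
    using assms by (auto simp: pos_def_def)
  have "Im (P$i$i) = 0" for i
    using arg_cong[OF hermitian_nth[OF herm, of i i], of Im] by simp
  then have P11: "P$1$1 = of_real p" and P22: "P$2$2 = of_real u"
    by (simp_all add: p_def u_def complex_eq_iff)
  have P12: "P$1$2 = b" and P21: "P$2$1 = cnj b"
    using hermitian_nth[OF herm, of 2 1] by (simp_all add: b_def)
  have "0 < Re (qform P (vector [1, 0]))" "0 < Re (qform P (vector [0, 1]))"
    by (intro pos; simp add: vec_eq_iff forall_2)+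
  then have "0 < p" "0 < u"
    by (simp_all add: qform_2x2 P11 P22)
  have "vector [- b, of_real p] \<noteq> (0::complex^2)"
    using \<open>0 < p\<close> by (auto simp: vec_eq_iff forall_2)
  from pos[OF this] have "0 < p * (p * u - (cmod b)^2)"
    by (simp add: qform_2x2 P11 P22 P12 P21 cmod_power2[unfolded power2_eq_square] algebra_simps power2_eq_square)
  then have "0 < p * u - (cmod b)^2"
    using \<open>0 < p\<close> by (simp add: zero_less_mult_iff)
  moreover have "4 * (p * u - (cmod b)^2) \<le> (p + u)^2"
  proof -
    have "4 * (p * u) \<le> (p + u)^2"
      using zero_le_power2[of "p - u"] by (simp add: power2_eq_square algebra_simps)
    then show ?thesis
      using zero_le_power2[of "cmod b"] unfolding right_diff_distrib by linarith
  qed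
  moreover have "trace P = of_real (p + u)"
    by (simp add: trace_2x2 P11 P22)
  moreover have "det P = of_real (p * u - (cmod b)^2)"
    by (simp add: det_2 P11 P22 P12 P21 flip: complex_norm_square)
  ultimately show thesis
    using \<open>0 < p\<close> \<open>0 < u\<close> by (intro that[of "p + u" "p * u - (cmod b)^2"]) auto
qed

lemma pos_def_nonzero:
  assumes "pos_def P"
  shows "P \<noteq> 0"
proof -
  obtain a d where "trace P = of_real a" "0 < a"
    using pos_def_trace_det[OF assms] .
  then show ?thesis
    by (auto simp: trace_2x2)
qed

lemma det_nonzero_if_trace_zero:
  assumes "S \<noteq> 0" "conj_transpose S \<in> cspan1 S" "trace S = 0"
  shows "det S \<noteq> 0"
proof
  assume det: "det S = 0"
  obtain c where c: "conj_transpose S = cscale c S"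
    using assms(2) by (auto simp: cspan1_def)
  have adj: "cnj (S$j$i) = c * S$i$j" for i j
    using arg_cong[OF c, of "\<lambda>A. A$i$j"] by simp
  have S22: "S$2$2 = - S$1$1"
    using assms(3) by (simp add: trace_2x2 add_eq_0_iff)
  \<comment> \<open>Multiplied by \<open>c\<close>, the trace-free identity \<open>S11\<^sup>2 + S12 S21 = - det S\<close>
    becomes a sum of squares.\<close>
  have "S$1$1 * cnj (S$1$1) + S$2$1 * cnj (S$2$1) = c * (S$1$1 * S$1$1 + S$1$2 * S$2$1)"
    by (simp add: adj algebra_simps)
  also have "S$1$1 * S$1$1 + S$1$2 * S$2$1 = - det S"
    by (simp add: det_2 S22)
  finally have "of_real ((cmod (S$1$1))^2 + (cmod (S$2$1))^2) = (0::complex)"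
    using det by (simp flip: complex_norm_square)
  then have "S$1$1 = 0" "S$2$1 = 0"
    by (simp_all only: of_real_eq_0_iff sum_power2_eq_zero_iff norm_eq_zero)
  moreover from this have "S$1$2 = 0"
    using adj[of 1 2] by simp
  ultimately have "S = 0"
    using S22 by (simp add: cmat2_eq_iff)
  with assms(1) show False ..
qed

lemma discriminant_nonneg_if_pos_def_in_cspan1:
  assumes "P \<in> cspan1 S" "pos_def P"
  shows "4 * cmod (det S) \<le> (cmod (trace S))^2"
proof -
  obtain c where c: "P = cscale c S"
    using assms(1) by (auto simp: cspan1_def)
  obtain a d where "trace P = of_real a" "det P = of_real d" "0 < a" "0 < d" "4 * d \<le> a^2"
    using pos_def_trace_det[OF assms(2)] .
  then have "4 * cmod (det P) \<le> (cmod (trace P))^2" "trace P \<noteq> 0"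
    by simp_all
  then have "(cmod c)^2 * (4 * cmod (det S)) \<le> (cmod c)^2 * (cmod (trace S))^2" "c \<noteq> 0"
    by (auto simp: c det_cscale trace_cscale norm_mult norm_power power_mult_distrib algebra_simps)
  then show ?thesis
    by simp
qed

definition trace_normalized :: "cmat2 set \<Rightarrow> cmat2" where
  "trace_normalized L = (SOME A. A \<in> L \<and> trace A = 1)"

lemma trace_normalized_cspan1:
  assumes "trace S \<noteq> 0"
  shows "trace_normalized (cspan1 S) = cscale (1 / trace S) S"
  unfolding trace_normalized_def
proof (rule some_equality)
  show "cscale (1 / trace S) S \<in> cspan1 S \<and> trace (cscale (1 / trace S) S) = 1"
    using assms by (auto simp: cspan1_def trace_cscale)
next
  fix A assume "A \<in> cspan1 S \<and> trace A = 1"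
  then obtain k where "A = cscale k S" "k * trace S = 1"
    by (auto simp: cspan1_def trace_cscale)
  moreover from this(2) have "k = 1 / trace S"
    using assms by (simp add: field_simps)
  ultimately show "A = cscale (1 / trace S) S"
    by simp
qed

lemma hermitian_trace_normalized_cspan1:
  assumes "conj_transpose S \<in> cspan1 S" "trace S \<noteq> 0"
  shows "hermitian (trace_normalized (cspan1 S))"
proof -
  obtain c where c: "conj_transpose S = cscale c S"
    using assms(1) by (auto simp: cspan1_def)
  have adj: "cnj (S$j$i) = c * S$i$j" for i j
    using arg_cong[OF c, of "\<lambda>A. A$i$j"] by simp
  then have "cnj (trace S) = c * trace S"
    by (simp add: trace_2x2 algebra_simps)
  then have "c = cnj (trace S) / trace S"
    using assms(2) by (simp add: field_simps)
  then show ?thesis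
    using assms(2) by (simp add: trace_normalized_cspan1 hermitian_def vec_eq_iff adj)
qed

lemma pos_def_trace_normalized:
  assumes "pos_def P"
  shows "pos_semidef (trace_normalized (cspan1 P))" "det (trace_normalized (cspan1 P)) \<noteq> 0"
proof -
  obtain a d where tr: "trace P = of_real a" and "det P = of_real d" "0 < a" "0 < d"
    using pos_def_trace_det[OF assms] .
  then have "trace P \<noteq> 0" "det P \<noteq> 0"
    by simp_all
  then have N: "trace_normalized (cspan1 P) = cscale (1 / trace P) P"
    by (simp add: trace_normalized_cspan1)
  show "det (trace_normalized (cspan1 P)) \<noteq> 0"
    using \<open>trace P \<noteq> 0\<close> \<open>det P \<noteq> 0\<close> by (simp add: N det_cscale)
  have "hermitian P"
    using assms by (simp add: pos_def_def)
  then have "hermitian (trace_normalized (cspan1 P))"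
    using \<open>trace P \<noteq> 0\<close> by (intro hermitian_trace_normalized_cspan1) (simp_all add: hermitian_def cspan1_self)
  moreover have "0 \<le> Re (qform (trace_normalized (cspan1 P)) x)" for x
  proof (cases "x = 0")
    case True
    then show ?thesis
      by (simp add: qform_def)
  next
    case False
    then have "0 < Re (qform P x)"
      using assms by (simp add: pos_def_def)
    then show ?thesis
      using \<open>0 < a\<close> by (simp add: N qform_cscale tr Re_divide_of_real)
  qed
  ultimately show "pos_semidef (trace_normalized (cspan1 P))"
    by (simp add: pos_semidef_def)
qed

lemma real_analytic_mat_on_imp_isCont:
  assumes "real_analytic_mat_on S s" "x \<in> S"
  shows "isCont s x"
proof -
  have "isCont (\<lambda>t. s t $ i $ j) x" for i j
    using assms unfolding real_analytic_mat_on_def by (intro real_analytic_on_imp_isCont) auto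
  then show ?thesis
    unfolding isCont_def by (intro vec_tendstoI)
qed

lemma real_analytic_mat_on_trace_normalize:
  assumes "real_analytic_mat_on S s" "\<And>x. x \<in> S \<Longrightarrow> trace (s x) \<noteq> 0"
  shows "real_analytic_mat_on S (\<lambda>x. cscale (1 / trace (s x)) (s x))"
proof -
  have "real_analytic_on S (\<lambda>x. trace (s x))"
    using assms(1) unfolding real_analytic_mat_on_def trace_2x2 by (intro real_analytic_on_add) auto
  then have "real_analytic_on S (\<lambda>x. s x $ i $ j / trace (s x))" for i j
    using assms unfolding real_analytic_mat_on_def by (intro real_analytic_on_divide) auto
  then show ?thesis
    by (simp add: real_analytic_mat_on_def)
qed

lemma real_analytic_mat_on_cong:
  assumes "open S" "\<And>x. x \<in> S \<Longrightarrow> f x = g x" "real_analytic_mat_on S f"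
  shows "real_analytic_mat_on S g"
  unfolding real_analytic_mat_on_def
proof (intro allI)
  fix i j
  have "real_analytic_on S (\<lambda>t. f t $ i $ j)"
    using assms(3) by (simp add: real_analytic_mat_on_def)
  moreover have "\<And>x. x \<in> S \<Longrightarrow> f x $ i $ j = g x $ i $ j"
    using assms(2) by simp
  ultimately show "real_analytic_on S (\<lambda>t. g t $ i $ j)"
    by (rule real_analytic_on_cong[OF assms(1), rotated])
qed

lemma real_analytic_mat_on_locally:
  "(\<And>x. x \<in> S \<Longrightarrow> \<exists>T. x \<in> T \<and> real_analytic_mat_on T f) \<Longrightarrow> real_analytic_mat_on S f"
  unfolding real_analytic_mat_on_def real_analytic_on_def by blast

lemma isCont_qform: "isCont A x \<Longrightarrow> isCont (\<lambda>t. qform (A t) v) x"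
  unfolding isCont_def qform_2x2 by (intro tendsto_intros) auto

section \<open>Generic points of the circle\<close>

lemma eventually_cis_ne: "\<forall>\<^sub>F \<theta> in at \<theta>0. cis \<theta> \<noteq> cis \<theta>0"
  unfolding eventually_at
proof (intro exI conjI allI ballI impI)
  fix \<theta> assume \<theta>: "\<theta> \<noteq> \<theta>0 \<and> dist \<theta> \<theta>0 < pi"
  show "cis \<theta> \<noteq> cis \<theta>0"
  proof
    assume "cis \<theta> = cis \<theta>0"
    then have "sin \<theta> = sin \<theta>0 \<and> cos \<theta> = cos \<theta>0"
      by (simp add: complex_eq_iff)
    then obtain n :: int where n: "\<theta> = \<theta>0 + 2 * pi * n"
      by (auto simp: sin_cos_eq_iff)
    with \<theta> have "pi * (2 * \<bar>real_of_int n\<bar>) < pi * 1"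
      by (simp add: dist_real_def abs_mult)
    then have "n = 0"
      by (subst (asm) mult_less_cancel_left_pos) auto
    with n \<theta> show False
      by simp
  qed
qed simp

lemma eventually_cis_notin_finite:
  assumes "finite B"
  shows "\<forall>\<^sub>F \<theta> in at \<theta>0. cis \<theta> \<notin> B"
proof -
  have "\<forall>\<^sub>F \<theta> in at \<theta>0. cis \<theta> \<noteq> b" for b
  proof (cases "b = cis \<theta>0")
    case True
    then show ?thesis
      using eventually_cis_ne by simp
  next
    case False
    have "((\<lambda>\<theta>. cis \<theta>) \<longlongrightarrow> cis \<theta>0) (at \<theta>0)"
      by (intro tendsto_intros)
    then show ?thesis
      by (rule tendsto_imp_eventually_ne) (use False in auto)
  qed
  then have "\<forall>\<^sub>F \<theta> in at \<theta>0. \<forall>b\<in>B. cis \<theta> \<noteq> b"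
    using assms by (intro eventually_ball_finite) auto
  then show ?thesis
    by (rule eventually_mono) blast
qed

lemma nonneg_if_eventually_nonneg_at:
  fixes g :: "real \<Rightarrow> real"
  assumes "isCont g x" "\<forall>\<^sub>F y in at x. 0 \<le> g y"
  shows "0 \<le> g x"
  using tendsto_lowerbound[OF isContD[OF assms(1)] assms(2)] by simp

section \<open>The trace-normalised section\<close>

lemma trace_nonzero_if_pos_def_nearby:
  fixes S :: "real \<Rightarrow> cmat2"
  assumes cont: "isCont S \<theta>0"
    and "S \<theta>0 \<noteq> 0" "conj_transpose (S \<theta>0) \<in> cspan1 (S \<theta>0)"
    and pos: "\<forall>\<^sub>F \<theta> in at \<theta>0. \<exists>P\<in>cspan1 (S \<theta>). pos_def P"
  shows "trace (S \<theta>0) \<noteq> 0"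
proof
  assume "trace (S \<theta>0) = 0"
  with assms(2,3) have "det (S \<theta>0) \<noteq> 0"
    by (rule det_nonzero_if_trace_zero)
  define g where "g \<theta> = (cmod (trace (S \<theta>)))^2 - 4 * cmod (det (S \<theta>))" for \<theta>
  have "isCont g \<theta>0"
    using cont unfolding isCont_def g_def trace_2x2 det_2 by (intro tendsto_intros) auto
  moreover have "\<forall>\<^sub>F \<theta> in at \<theta>0. 0 \<le> g \<theta>"
    using pos by eventually_elim (use discriminant_nonneg_if_pos_def_in_cspan1 in \<open>force simp: g_def\<close>)
  ultimately have "0 \<le> g \<theta>0"
    by (rule nonneg_if_eventually_nonneg_at)
  with \<open>trace (S \<theta>0) = 0\<close> \<open>det (S \<theta>0) \<noteq> 0\<close> show False
    by (simp add: g_def)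
qed

locale selfadjoint_analytic_line_bundle =
  fixes E :: "complex \<Rightarrow> cmat2 set"
  assumes line_subbundle: "analytic_line_subbundle E"
    and selfadjoint: "\<forall>z\<in>sphere 0 1. \<forall>A\<in>E z. conj_transpose A \<in> E z"
    and finite_degenerate: "finite {z\<in>sphere 0 1. \<not> (\<exists>A\<in>E z. pos_def A)}"
begin

lemma eventually_pos_def_in_fibre: "\<forall>\<^sub>F \<theta> in at \<theta>0. \<exists>P\<in>E (cis \<theta>). pos_def P"
  using eventually_cis_notin_finite[OF finite_degenerate] by eventually_elim simp

lemma normalizable_local_frame:
  obtains U s where "open U" "\<theta>0 \<in> U" "real_analytic_mat_on U s"
    "\<And>\<theta>. \<theta> \<in> U \<Longrightarrow> E (cis \<theta>) = cspan1 (s \<theta>)"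
    "\<And>\<theta>. \<theta> \<in> U \<Longrightarrow> conj_transpose (s \<theta>) \<in> cspan1 (s \<theta>)"
    "\<And>\<theta>. \<theta> \<in> U \<Longrightarrow> trace (s \<theta>) \<noteq> 0"
proof -
  obtain r s where "r > 0" and an: "real_analytic_mat_on {\<theta>0 - r<..<\<theta>0 + r} s"
    and frame: "\<forall>\<theta>\<in>{\<theta>0 - r<..<\<theta>0 + r}. s \<theta> \<noteq> 0 \<and> E (cis \<theta>) = cspan1 (s \<theta>)"
    using line_subbundle unfolding analytic_line_subbundle_def by blast
  define U where "U = {\<theta>0 - r<..<\<theta>0 + r}"
  have adj: "conj_transpose (s \<theta>) \<in> cspan1 (s \<theta>)" if "\<theta> \<in> U" for \<theta>
  proof -
    have fibre: "E (cis \<theta>) = cspan1 (s \<theta>)"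
      using frame that by (auto simp: U_def)
    have "cis \<theta> \<in> sphere 0 1" "s \<theta> \<in> E (cis \<theta>)"
      by (simp_all add: fibre cspan1_self)
    then have "conj_transpose (s \<theta>) \<in> E (cis \<theta>)"
      using selfadjoint by blast
    then show ?thesis
      by (simp add: fibre)
  qed
  have "trace (s \<theta>) \<noteq> 0" if "\<theta> \<in> U" for \<theta>
  proof (rule trace_nonzero_if_pos_def_nearby)
    show "isCont s \<theta>"
      using an that unfolding U_def by (rule real_analytic_mat_on_imp_isCont)
    show "s \<theta> \<noteq> 0" "conj_transpose (s \<theta>) \<in> cspan1 (s \<theta>)"
      using frame adj that by (auto simp: U_def)
    have "\<forall>\<^sub>F \<theta>' in at \<theta>. \<theta>' \<in> U"
      using that by (intro eventually_at_in_open') (simp_all add: U_def)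
    with eventually_pos_def_in_fibre[of \<theta>]
    show "\<forall>\<^sub>F \<theta>' in at \<theta>. \<exists>P\<in>cspan1 (s \<theta>'). pos_def P"
      by eventually_elim (use frame in \<open>auto simp: U_def\<close>)
  qed
  then show thesis
    using \<open>r > 0\<close> an frame adj by (intro that[of U s]) (auto simp: U_def)
qed

lemma real_analytic_circle_section_trace_normalized:
  "real_analytic_circle_section (\<lambda>z. trace_normalized (E z))"
  unfolding real_analytic_circle_section_def
proof (rule real_analytic_mat_on_locally)
  fix \<theta>0
  obtain U s where U: "open U" "\<theta>0 \<in> U" "real_analytic_mat_on U s"
    and frame: "\<And>\<theta>. \<theta> \<in> U \<Longrightarrow> E (cis \<theta>) = cspan1 (s \<theta>)"
      "\<And>\<theta>. \<theta> \<in> U \<Longrightarrow> conj_transpose (s \<theta>) \<in> cspan1 (s \<theta>)"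
      "\<And>\<theta>. \<theta> \<in> U \<Longrightarrow> trace (s \<theta>) \<noteq> 0"
    by (rule normalizable_local_frame[of \<theta>0]) blast
  have "real_analytic_mat_on U (\<lambda>\<theta>. trace_normalized (E (cis \<theta>)))"
    using U(1) _ real_analytic_mat_on_trace_normalize[OF U(3) frame(3)]
    by (rule real_analytic_mat_on_cong) (simp add: frame trace_normalized_cspan1)
  with U(2) show "\<exists>T. \<theta>0 \<in> T \<and> real_analytic_mat_on T (\<lambda>\<theta>. trace_normalized (E (cis \<theta>)))"
    by blast
qed

lemma trace_normalized_in_fibre:
  "trace_normalized (E (cis \<theta>)) \<in> E (cis \<theta>) \<and> hermitian (trace_normalized (E (cis \<theta>)))"
proof -
  obtain U s where "\<theta> \<in> U"
    and frame: "\<And>\<theta>. \<theta> \<in> U \<Longrightarrow> E (cis \<theta>) = cspan1 (s \<theta>)"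
      "\<And>\<theta>. \<theta> \<in> U \<Longrightarrow> conj_transpose (s \<theta>) \<in> cspan1 (s \<theta>)"
      "\<And>\<theta>. \<theta> \<in> U \<Longrightarrow> trace (s \<theta>) \<noteq> 0"
    by (rule normalizable_local_frame[of \<theta>]) blast
  have "hermitian (trace_normalized (cspan1 (s \<theta>)))"
    using frame(2,3)[OF \<open>\<theta> \<in> U\<close>] by (rule hermitian_trace_normalized_cspan1)
  moreover have "trace_normalized (cspan1 (s \<theta>)) = cscale (1 / trace (s \<theta>)) (s \<theta>)"
    using frame(3)[OF \<open>\<theta> \<in> U\<close>] by (rule trace_normalized_cspan1)
  ultimately show ?thesis
    using frame(1)[OF \<open>\<theta> \<in> U\<close>] by (auto simp: cspan1_def)
qed

lemma trace_normalized_at_pos_def: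
  assumes "P \<in> E (cis \<theta>)" "pos_def P"
  shows "trace_normalized (E (cis \<theta>)) = trace_normalized (cspan1 P)"
proof -
  obtain U s where "\<theta> \<in> U" and frame: "\<And>\<theta>. \<theta> \<in> U \<Longrightarrow> E (cis \<theta>) = cspan1 (s \<theta>)"
    by (rule normalizable_local_frame[of \<theta>]) blast
  then have "cspan1 P = E (cis \<theta>)"
    using cspan1_eq[OF _ pos_def_nonzero] assms by simp
  then show ?thesis
    by simp
qed

lemma pos_semidef_trace_normalized: "pos_semidef (trace_normalized (E (cis \<theta>)))"
proof -
  define X where "X \<theta> = trace_normalized (E (cis \<theta>))" for \<theta>
  have "0 \<le> Re (qform (X \<theta>) v)" for v
  proof (rule nonneg_if_eventually_nonneg_at[where g = "\<lambda>\<theta>. Re (qform (X \<theta>) v)"])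
    have "isCont X \<theta>"
      using real_analytic_circle_section_trace_normalized
      unfolding real_analytic_circle_section_def X_def
      by (rule real_analytic_mat_on_imp_isCont) simp
    then show "isCont (\<lambda>\<theta>. Re (qform (X \<theta>) v)) \<theta>"
      by (intro isCont_Re isCont_qform)
    show "\<forall>\<^sub>F \<theta>' in at \<theta>. 0 \<le> Re (qform (X \<theta>') v)"
      using eventually_pos_def_in_fibre
    proof eventually_elim
      case (elim \<theta>')
      then obtain P where "P \<in> E (cis \<theta>')" "pos_def P"
        by blast
      then have "X \<theta>' = trace_normalized (cspan1 P)"
        unfolding X_def by (rule trace_normalized_at_pos_def)
      then show ?case
        using pos_def_trace_normalized(1)[OF \<open>pos_def P\<close>] by (simp add: pos_semidef_def)
    qed
  qed
  moreover have "hermitian (X \<theta>)"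
    using trace_normalized_in_fibre unfolding X_def by blast
  ultimately show ?thesis
    by (simp add: pos_semidef_def X_def)
qed

end

theorem mainTheorem10:
  fixes E :: "complex \<Rightarrow> cmat2 set"
  assumes linebdl: "analytic_line_subbundle E"
    and selfadj: "\<forall>z\<in>sphere 0 1. \<forall>A\<in>E z. conj_transpose A \<in> E z"
    and posdef: "finite {z\<in>sphere 0 1. \<not> (\<exists>A\<in>E z. pos_def A)}"
  shows "\<exists>X :: complex \<Rightarrow> cmat2.
           real_analytic_circle_section X \<and>
           (\<forall>z\<in>sphere 0 1. X z \<in> E z \<and> pos_semidef (X z)) \<and>
           (\<exists>z\<in>sphere 0 1. det (X z) \<noteq> 0)"
proof -
  interpret selfadjoint_analytic_line_bundle E
    using assms by unfold_locales
  define X where "X z = trace_normalized (E z)" for z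
  have "X z \<in> E z \<and> pos_semidef (X z)" if "z \<in> sphere 0 1" for z
  proof -
    have "z \<noteq> 0" "cmod z = 1"
      using that by auto
    then have "z = cis (Arg z)"
      by (simp add: cis_Arg sgn_div_norm)
    then obtain \<theta> where "z = cis \<theta>" ..
    then show ?thesis
      using trace_normalized_in_fibre pos_semidef_trace_normalized by (simp add: X_def)
  qed
  moreover obtain \<theta> P where "P \<in> E (cis \<theta>)" "pos_def P"
    using eventually_happens'[OF at_neq_bot eventually_pos_def_in_fibre] by blast
  then have "det (X (cis \<theta>)) \<noteq> 0"
    by (simp add: X_def trace_normalized_at_pos_def pos_def_trace_normalized(2))
  moreover have "real_analytic_circle_section X"
    unfolding X_def by (rule real_analytic_circle_section_trace_normalized)
  ultimately show ?thesis
    by (intro exI[of _ X]) auto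
qed

end
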